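(* Let $A$ be a hyperoperator on $\mathbb{R}^n$ on the complex Banach space $X$, let $f\in\mathcal{E}(\mathbb{R}^n,\mathbb{R}^m)$, and assume $f(a)x=0$ for all $x\in D_A$. Then $\sigma(A)\subset f^{-1}(0)$.
   Context: $X$ is a complex Banach space, $L(X)$ the bounded operators. $\mathcal{D}(\mathbb{R}^n)=C_c^\infty(\mathbb{R}^n)$ (complex-valued); $\mathcal{E}(\mathbb{R}^n,\mathbb{R}^m)$ the smooth maps $\mathbb{R}^n\to\mathbb{R}^m$. A hyperoperator on $\mathbb{R}^n$ is a linear map $A:\mathcal{D}(\mathbb{R}^n)\to L(X)$, continuous ($A(\phi_j)\to0$ in operator norm when $\phi_j\to0$ in $\mathcal{D}(\mathbb{R}^n)$), multiplicative, with (i) $D_A:=\bigcup_\phi\operatorname{Im}A(\phi)$ dense and (ii) $\bigcap_\phi\operatorname{Ker}A(\phi)=\{0\}$. For $x\in D_A$ written $x=A(\phi)y$, $f(a)x:=A(f\phi)y$ (well defined, componentwise). $\sigma(A)$ is the support of $A$ as an $L(X)$-valued distribution. *)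

theory Defs
  imports "HOL-Analysis.Analysis"
begin

fun iter_pderiv :: "'n::finite list \<Rightarrow> (real^'n \<Rightarrow> 'b::real_normed_vector) \<Rightarrow> real^'n \<Rightarrow> 'b" where
  "iter_pderiv [] f = f"
| "iter_pderiv (i # is) f = (\<lambda>x. frechet_derivative (iter_pderiv is f) (at x) (axis i 1))"

definition smooth :: "(real^'n::finite \<Rightarrow> 'b::real_normed_vector) \<Rightarrow> bool" where
  "smooth f \<longleftrightarrow> (\<forall>is. \<forall>x. iter_pderiv is f differentiable (at x))"

definition tsupp :: "(real^'n::finite \<Rightarrow> 'b::zero) \<Rightarrow> (real^'n) set" where
  "tsupp f = closure {x. f x \<noteq> 0}"

definition test_fun :: "(real^'n::finite \<Rightarrow> complex) \<Rightarrow> bool" where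
  "test_fun \<phi> \<longleftrightarrow> smooth \<phi> \<and> compact (tsupp \<phi>)"

definition test_tendsto_zero :: "(nat \<Rightarrow> real^'n::finite \<Rightarrow> complex) \<Rightarrow> bool" where
  "test_tendsto_zero \<phi>s \<longleftrightarrow>
     (\<forall>j. test_fun (\<phi>s j)) \<and>
     (\<exists>K. compact K \<and> (\<forall>j. tsupp (\<phi>s j) \<subseteq> K)) \<and>
     (\<forall>is. uniform_limit UNIV (\<lambda>j. iter_pderiv is (\<phi>s j)) (\<lambda>x. 0) sequentially)"

section \<open>Complex Banach spaces as real Banach spaces with a complex structure\<close>

text \<open>@J@ is multiplication by the imaginary unit.\<close>
definition cscale :: "('x::real_normed_vector \<Rightarrow>\<^sub>L 'x) \<Rightarrow> complex \<Rightarrow> 'x \<Rightarrow> 'x" where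
  "cscale J c x = Re c *\<^sub>R x + Im c *\<^sub>R blinfun_apply J x"

definition complex_structure :: "('x::real_normed_vector \<Rightarrow>\<^sub>L 'x) \<Rightarrow> bool" where
  "complex_structure J \<longleftrightarrow>
     (\<forall>x. blinfun_apply J (blinfun_apply J x) = - x) \<and>
     (\<forall>c x. norm (cscale J c x) = cmod c * norm x)"

text \<open>L(X): bounded complex-linear operators = bounded real-linear operators commuting with J.\<close>
definition cbounded_ops :: "('x::real_normed_vector \<Rightarrow>\<^sub>L 'x) \<Rightarrow> ('x \<Rightarrow>\<^sub>L 'x) set" where
  "cbounded_ops J = {T. T o\<^sub>L J = J o\<^sub>L T}"

definition op_cscale :: "('x::real_normed_vector \<Rightarrow>\<^sub>L 'x) \<Rightarrow> complex \<Rightarrow> ('x \<Rightarrow>\<^sub>L 'x) \<Rightarrow> ('x \<Rightarrow>\<^sub>L 'x)" where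
  "op_cscale J c T = Re c *\<^sub>R T + Im c *\<^sub>R (J o\<^sub>L T)"

definition hyp_domain :: "((real^'n::finite \<Rightarrow> complex) \<Rightarrow> ('x::real_normed_vector \<Rightarrow>\<^sub>L 'x)) \<Rightarrow> 'x set" where
  "hyp_domain A = (\<Union>\<phi>\<in>{\<phi>. test_fun \<phi>}. range (blinfun_apply (A \<phi>)))"

definition hyperoperator ::
  "('x::banach \<Rightarrow>\<^sub>L 'x) \<Rightarrow> ((real^'n::finite \<Rightarrow> complex) \<Rightarrow> ('x \<Rightarrow>\<^sub>L 'x)) \<Rightarrow> bool" where
  "hyperoperator J A \<longleftrightarrow>
     (\<forall>\<phi>. test_fun \<phi> \<longrightarrow> A \<phi> \<in> cbounded_ops J) \<and>
     (\<forall>\<phi> \<psi>. test_fun \<phi> \<longrightarrow> test_fun \<psi> \<longrightarrow> A (\<lambda>t. \<phi> t + \<psi> t) = A \<phi> + A \<psi>) \<and>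
     (\<forall>c \<phi>. test_fun \<phi> \<longrightarrow> A (\<lambda>t. c * \<phi> t) = op_cscale J c (A \<phi>)) \<and>
     (\<forall>\<phi>s. test_tendsto_zero \<phi>s \<longrightarrow> (\<lambda>j. A (\<phi>s j)) \<longlonglongrightarrow> 0) \<and>
     (\<forall>\<phi> \<psi>. test_fun \<phi> \<longrightarrow> test_fun \<psi> \<longrightarrow> A (\<lambda>t. \<phi> t * \<psi> t) = A \<phi> o\<^sub>L A \<psi>) \<and>
     closure (hyp_domain A) = UNIV \<and>
     (\<forall>x. (\<forall>\<phi>. test_fun \<phi> \<longrightarrow> blinfun_apply (A \<phi>) x = 0) \<longrightarrow> x = 0)"

text \<open>For a scalar smooth g and x = A(phi) y in D_A: g(a) x := A(g phi) y.\<close>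
definition hyp_fun_apply ::
  "((real^'n::finite \<Rightarrow> complex) \<Rightarrow> ('x::real_normed_vector \<Rightarrow>\<^sub>L 'x)) \<Rightarrow> (real^'n \<Rightarrow> real) \<Rightarrow> 'x \<Rightarrow> 'x" where
  "hyp_fun_apply A g x =
     (let (\<phi>, y) = (SOME (\<phi>, y). test_fun \<phi> \<and> x = blinfun_apply (A \<phi>) y)
      in blinfun_apply (A (\<lambda>t. complex_of_real (g t) * \<phi> t)) y)"

definition hyp_support ::
  "((real^'n::finite \<Rightarrow> complex) \<Rightarrow> ('x::real_normed_vector \<Rightarrow>\<^sub>L 'x)) \<Rightarrow> (real^'n) set" where
  "hyp_support A = UNIV - \<Union>{U. open U \<and> (\<forall>\<phi>. test_fun \<phi> \<and> tsupp \<phi> \<subseteq> U \<longrightarrow> A \<phi> = 0)}"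

end

theory Submission
  imports Defs
begin

text \<open>Suppose some component \<open>g = f\<^sub>k\<close> does not vanish at a point of the support; then
  \<open>g \<noteq> 0\<close> on an open neighbourhood \<open>V\<close> of it. The hypothesis says \<open>A(g\<xi>) = 0\<close> for every
  test function \<open>\<xi>\<close>: the value \<open>g(a)x\<close> does not depend on the representation \<open>x = A(\<phi>)y\<close>,
  since \<open>A(\<theta>)A(g\<phi>)y = A(g\<theta>)A(\<phi>)y\<close> and the kernels of the \<open>A(\<theta>)\<close> intersect trivially.
  A test function \<open>\<phi>\<close> supported in \<open>V\<close> factors as \<open>\<phi> = g\<cdot>(\<phi>/g)\<close> with \<open>\<phi>/g\<close> again a test
  function, so \<open>A(\<phi>) = 0\<close> and \<open>V\<close> misses the support.\<close>

section \<open>Local smoothness\<close>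

definition smooth_on :: "(real^'n::finite) set \<Rightarrow> (real^'n \<Rightarrow> 'b::real_normed_vector) \<Rightarrow> bool" where
  "smooth_on S h \<longleftrightarrow> (\<forall>is. \<forall>x\<in>S. iter_pderiv is h differentiable (at x))"

lemma smooth_iff_smooth_on_UNIV: "smooth h \<longleftrightarrow> smooth_on UNIV h"
  unfolding smooth_def smooth_on_def by auto

lemma smooth_imp_smooth_on: "smooth h \<Longrightarrow> smooth_on S h"
  unfolding smooth_def smooth_on_def by blast

lemma smooth_on_Un_UNIV: "smooth_on V h \<Longrightarrow> smooth_on W h \<Longrightarrow> V \<union> W = UNIV \<Longrightarrow> smooth h"
  unfolding smooth_def smooth_on_def by blast

lemma smooth_on_differentiable: "smooth_on S h \<Longrightarrow> x \<in> S \<Longrightarrow> h differentiable (at x)"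
  unfolding smooth_on_def by (metis iter_pderiv.simps(1))

lemma continuous_on_smooth: "smooth h \<Longrightarrow> continuous_on S h"
  unfolding smooth_iff_smooth_on_UNIV
  by (intro continuous_at_imp_continuous_on ballI differentiable_imp_continuous_within)
    (simp add: smooth_on_differentiable)

lemma open_smooth_nonzero: "smooth g \<Longrightarrow> open {t. g t \<noteq> 0}"
  using open_Collect_neq[OF continuous_on_smooth continuous_on_const] .

lemma iter_pderiv_append: "iter_pderiv (ks @ js) h = iter_pderiv ks (iter_pderiv js h)"
  by (induction ks) auto

lemma smooth_on_pderiv:
  assumes "smooth_on S h"
  shows "smooth_on S (\<lambda>x. frechet_derivative h (at x) (axis i 1))"
proof -
  have "iter_pderiv ks (\<lambda>x. frechet_derivative h (at x) (axis i 1)) = iter_pderiv (ks @ [i]) h" for ks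
    by (simp add: iter_pderiv_append)
  then show ?thesis using assms unfolding smooth_on_def by metis
qed

lemma frechet_derivative_cong_open:
  fixes h1 h2 :: "'a::real_normed_vector \<Rightarrow> 'b::real_normed_vector"
  assumes "open S" "x \<in> S" "\<And>y. y \<in> S \<Longrightarrow> h1 y = h2 y"
  shows "frechet_derivative h1 (at x) = frechet_derivative h2 (at x)"
    and "h1 differentiable (at x) \<longleftrightarrow> h2 differentiable (at x)"
proof -
  have "(h1 has_derivative D) (at x) \<longleftrightarrow> (h2 has_derivative D) (at x)" for D
    using has_derivative_transform_within_open assms by metis
  then show "frechet_derivative h1 (at x) = frechet_derivative h2 (at x)"
    and "h1 differentiable (at x) \<longleftrightarrow> h2 differentiable (at x)"
    unfolding frechet_derivative_def differentiable_def by simp_all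
qed

lemma iter_pderiv_cong_open:
  assumes "open S" "\<And>y. y \<in> S \<Longrightarrow> h1 y = h2 y" "x \<in> S"
  shows "iter_pderiv ks h1 x = iter_pderiv ks h2 x"
  using assms(3)
proof (induction ks arbitrary: x)
  case (Cons i ks)
  then show ?case by (simp add: frechet_derivative_cong_open(1)[OF assms(1) Cons.prems Cons.IH])
qed (use assms in simp)

lemma smooth_on_cong_open:
  assumes "open S" "\<And>y. y \<in> S \<Longrightarrow> h1 y = h2 y"
  shows "smooth_on S h1 \<longleftrightarrow> smooth_on S h2"
proof -
  have "iter_pderiv ks h1 differentiable (at x) \<longleftrightarrow> iter_pderiv ks h2 differentiable (at x)"
    if "x \<in> S" for ks x
    using frechet_derivative_cong_open(2)[OF assms(1) that iter_pderiv_cong_open[OF assms]] .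
  then show ?thesis unfolding smooth_on_def by blast
qed

lemma iter_pderiv_zero: "iter_pderiv ks (\<lambda>_. 0) = (\<lambda>_. 0)"
  by (induction ks) simp_all

lemma smooth_on_vanishing:
  assumes "open S" "\<And>y. y \<in> S \<Longrightarrow> h y = 0"
  shows "smooth_on S h"
proof -
  have "smooth_on S (\<lambda>_. 0 :: 'b::real_normed_vector)"
    unfolding smooth_on_def iter_pderiv_zero by simp
  then show ?thesis using smooth_on_cong_open[OF assms] by simp
qed

lemma iter_pderiv_bounded_linear:
  assumes L: "bounded_linear L" and f: "smooth f"
  shows "iter_pderiv ks (\<lambda>x. L (f x)) = (\<lambda>x. L (iter_pderiv ks f x))"
proof (induction ks)
  case (Cons i ks)
  have "frechet_derivative (\<lambda>y. L (iter_pderiv ks f y)) (at x) =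
      (\<lambda>v. L (frechet_derivative (iter_pderiv ks f) (at x) v))" for x
  proof (rule frechet_derivative_at[symmetric], rule bounded_linear.has_derivative[OF L])
    show "(iter_pderiv ks f has_derivative frechet_derivative (iter_pderiv ks f) (at x)) (at x)"
      using f by (simp add: smooth_def flip: frechet_derivative_works)
  qed
  then show ?case using Cons by simp
qed simp

lemma smooth_bounded_linear:
  assumes L: "bounded_linear L" and f: "smooth f"
  shows "smooth (\<lambda>x. L (f x))"
  unfolding smooth_def iter_pderiv_bounded_linear[OF assms]
proof (intro allI)
  fix ks x
  have "(iter_pderiv ks f has_derivative frechet_derivative (iter_pderiv ks f) (at x)) (at x)"
    using f by (simp add: smooth_def flip: frechet_derivative_works)
  from bounded_linear.has_derivative[OF L this]
  show "(\<lambda>x. L (iter_pderiv ks f x)) differentiable (at x)" by (rule differentiableI)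
qed

lemma smooth_on_pderiv_closed:
  assumes S: "open S"
    and diff: "\<And>h x. h \<in> F \<Longrightarrow> x \<in> S \<Longrightarrow> h differentiable (at x)"
    and pderiv: "\<And>h i. h \<in> F \<Longrightarrow> \<exists>h'\<in>F. \<forall>x\<in>S. frechet_derivative h (at x) (axis i 1) = h' x"
    and "h \<in> F"
  shows "smooth_on S h"
proof -
  have "\<exists>h'\<in>F. \<forall>x\<in>S. iter_pderiv ks h x = h' x" for ks
  proof (induction ks)
    case (Cons i ks)
    then obtain h' where h': "h' \<in> F" "\<And>x. x \<in> S \<Longrightarrow> iter_pderiv ks h x = h' x" by blast
    obtain h'' where "h'' \<in> F" "\<forall>x\<in>S. frechet_derivative h' (at x) (axis i 1) = h'' x"
      using pderiv[OF h'(1)] by blast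
    then show ?case using frechet_derivative_cong_open(1)[OF S _ h'(2)] by auto
  qed (use \<open>h \<in> F\<close> in auto)
  then show ?thesis
    unfolding smooth_on_def using diff frechet_derivative_cong_open(2)[OF S] by metis
qed

text \<open>By the product and quotient rules this class is closed under partial derivatives, which
  makes it an invariant for iterated differentiation; the class of functions smooth on \<open>S\<close>
  alone is not.\<close>

inductive_set smooth_on_alg :: "(real^'n::finite) set \<Rightarrow> (real^'n \<Rightarrow> 'b::real_normed_field) set"
  for S where
  base: "smooth_on S h \<Longrightarrow> h \<in> smooth_on_alg S"
| add: "h1 \<in> smooth_on_alg S \<Longrightarrow> h2 \<in> smooth_on_alg S \<Longrightarrow> (\<lambda>x. h1 x + h2 x) \<in> smooth_on_alg S"
| mult: "h1 \<in> smooth_on_alg S \<Longrightarrow> h2 \<in> smooth_on_alg S \<Longrightarrow> (\<lambda>x. h1 x * h2 x) \<in> smooth_on_alg S"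
| uminus: "h \<in> smooth_on_alg S \<Longrightarrow> (\<lambda>x. - h x) \<in> smooth_on_alg S"
| inverse: "smooth_on S h \<Longrightarrow> (\<forall>x\<in>S. h x \<noteq> 0) \<Longrightarrow> (\<lambda>x. inverse (h x)) \<in> smooth_on_alg S"

lemma smooth_on_alg_has_derivative:
  "h \<in> smooth_on_alg S \<Longrightarrow> x \<in> S \<Longrightarrow> (h has_derivative frechet_derivative h (at x)) (at x)"
  unfolding frechet_derivative_works[symmetric]
  by (induction rule: smooth_on_alg.induct) (auto simp: smooth_on_differentiable)

lemma frechet_derivative_eqI:
  "(h has_derivative D) (at x) \<Longrightarrow> D v = c \<Longrightarrow> frechet_derivative h (at x) v = c"
  using frechet_derivative_at by metis

lemma smooth_on_alg_pderiv:
  assumes "h \<in> smooth_on_alg S"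
  shows "\<exists>h'\<in>smooth_on_alg S. \<forall>x\<in>S. frechet_derivative h (at x) (axis i 1) = h' x"
  using assms
proof (induction rule: smooth_on_alg.induct)
  case (base h)
  then show ?case
    by (intro bexI[of _ "\<lambda>x. frechet_derivative h (at x) (axis i 1)"])
      (auto intro: smooth_on_alg.base smooth_on_pderiv)
next
  case (add h1 h2)
  then obtain a b
    where a: "a \<in> smooth_on_alg S" "\<And>x. x \<in> S \<Longrightarrow> frechet_derivative h1 (at x) (axis i 1) = a x"
      and b: "b \<in> smooth_on_alg S" "\<And>x. x \<in> S \<Longrightarrow> frechet_derivative h2 (at x) (axis i 1) = b x"
    by blast
  have "frechet_derivative (\<lambda>x. h1 x + h2 x) (at x) (axis i 1) = a x + b x" if "x \<in> S" for x
    using has_derivative_add[OF smooth_on_alg_has_derivative[OF add.hyps(1) that]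
        smooth_on_alg_has_derivative[OF add.hyps(2) that]]
    by (rule frechet_derivative_eqI) (simp add: a b that)
  with a b show ?case by (intro bexI[of _ "\<lambda>x. a x + b x"]) (auto intro: smooth_on_alg.add)
next
  case (mult h1 h2)
  then obtain a b
    where a: "a \<in> smooth_on_alg S" "\<And>x. x \<in> S \<Longrightarrow> frechet_derivative h1 (at x) (axis i 1) = a x"
      and b: "b \<in> smooth_on_alg S" "\<And>x. x \<in> S \<Longrightarrow> frechet_derivative h2 (at x) (axis i 1) = b x"
    by blast
  have "frechet_derivative (\<lambda>x. h1 x * h2 x) (at x) (axis i 1) = h1 x * b x + a x * h2 x"
    if "x \<in> S" for x
    using has_derivative_mult[OF smooth_on_alg_has_derivative[OF mult.hyps(1) that]
        smooth_on_alg_has_derivative[OF mult.hyps(2) that]]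
    by (rule frechet_derivative_eqI) (simp add: a b that)
  with a b mult.hyps show ?case
    by (intro bexI[of _ "\<lambda>x. h1 x * b x + a x * h2 x"])
      (auto intro: smooth_on_alg.add smooth_on_alg.mult)
next
  case (uminus h)
  then obtain a
    where a: "a \<in> smooth_on_alg S" "\<And>x. x \<in> S \<Longrightarrow> frechet_derivative h (at x) (axis i 1) = a x"
    by blast
  have "frechet_derivative (\<lambda>x. - h x) (at x) (axis i 1) = - a x" if "x \<in> S" for x
    using has_derivative_minus[OF smooth_on_alg_has_derivative[OF uminus.hyps that]]
    by (rule frechet_derivative_eqI) (simp add: a that)
  with a show ?case by (intro bexI[of _ "\<lambda>x. - a x"]) (auto intro: smooth_on_alg.uminus)
next
  case (inverse h)
  let ?dh = "\<lambda>x. frechet_derivative h (at x) (axis i 1)"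
  let ?d = "\<lambda>x. - (inverse (h x) * ?dh x * inverse (h x))"
  have "frechet_derivative (\<lambda>x. inverse (h x)) (at x) (axis i 1) = ?d x" if "x \<in> S" for x
    using Deriv.has_derivative_inverse[OF bspec[OF inverse(2) that]
        smooth_on_alg_has_derivative[OF smooth_on_alg.base[OF inverse(1)] that]]
    by (rule frechet_derivative_eqI) simp
  moreover have "?d \<in> smooth_on_alg S"
    using smooth_on_alg.inverse[OF inverse] smooth_on_alg.base[OF smooth_on_pderiv[OF inverse(1)]]
    by (intro smooth_on_alg.uminus smooth_on_alg.mult)
  ultimately show ?case by (intro bexI[of _ ?d]) auto
qed

lemma smooth_on_alg_smooth_on: "open S \<Longrightarrow> h \<in> smooth_on_alg S \<Longrightarrow> smooth_on S h"
  by (rule smooth_on_pderiv_closed[of S "smooth_on_alg S"])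
    (simp_all add: smooth_on_alg_pderiv differentiableI[OF smooth_on_alg_has_derivative])

lemma smooth_on_mult:
  fixes h1 h2 :: "real^'n::finite \<Rightarrow> 'b::real_normed_field"
  shows "open S \<Longrightarrow> smooth_on S h1 \<Longrightarrow> smooth_on S h2 \<Longrightarrow> smooth_on S (\<lambda>x. h1 x * h2 x)"
  by (metis smooth_on_alg_smooth_on smooth_on_alg.mult smooth_on_alg.base)

lemma smooth_on_divide:
  fixes h1 h2 :: "real^'n::finite \<Rightarrow> 'b::real_normed_field"
  shows "open S \<Longrightarrow> smooth_on S h1 \<Longrightarrow> smooth_on S h2 \<Longrightarrow> \<forall>x\<in>S. h2 x \<noteq> 0
    \<Longrightarrow> smooth_on S (\<lambda>x. h1 x / h2 x)"
  unfolding divide_inverse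
  by (metis smooth_on_alg_smooth_on smooth_on_alg.mult smooth_on_alg.base smooth_on_alg.inverse)

section \<open>Test functions\<close>

lemma tsupp_mono: "(\<And>t. g t \<noteq> 0 \<Longrightarrow> h t \<noteq> 0) \<Longrightarrow> tsupp g \<subseteq> tsupp h"
  unfolding tsupp_def by (rule closure_mono) auto

lemma eq_0_outside_tsupp: "t \<notin> tsupp h \<Longrightarrow> h t = 0"
  unfolding tsupp_def using closure_subset[of "{x. h x \<noteq> 0}"] by auto

lemma test_funI_tsupp_mono:
  assumes "smooth g" "test_fun h" "\<And>t. g t \<noteq> 0 \<Longrightarrow> h t \<noteq> 0"
  shows "test_fun g"
proof -
  have "compact (tsupp h)" using assms(2) by (simp add: test_fun_def)
  moreover have "closed (tsupp g)" by (simp add: tsupp_def)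
  ultimately have "compact (tsupp h \<inter> tsupp g)" by (rule compact_Int_closed)
  moreover have "tsupp g \<subseteq> tsupp h" using assms(3) by (rule tsupp_mono)
  ultimately have "compact (tsupp g)" by (simp add: Int_absorb1)
  with assms(1) show ?thesis by (simp add: test_fun_def)
qed

lemma test_fun_smooth_mult:
  assumes g: "smooth g" and \<xi>: "test_fun \<xi>"
  shows "test_fun (\<lambda>t. g t * \<xi> t)"
proof (rule test_funI_tsupp_mono[OF _ \<xi>])
  have "smooth_on UNIV (\<lambda>t. g t * \<xi> t)"
    using g \<xi> unfolding test_fun_def smooth_iff_smooth_on_UNIV by (intro smooth_on_mult) simp_all
  then show "smooth (\<lambda>t. g t * \<xi> t)" by (simp add: smooth_iff_smooth_on_UNIV)
qed simp

lemma test_fun_divide: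
  fixes g \<phi> :: "real^'n::finite \<Rightarrow> complex"
  assumes g: "smooth g" and \<phi>: "test_fun \<phi>" and supp: "tsupp \<phi> \<subseteq> {t. g t \<noteq> 0}"
  shows "test_fun (\<lambda>t. \<phi> t / g t)"
proof (rule test_funI_tsupp_mono[OF _ \<phi>])
  have "smooth_on {t. g t \<noteq> 0} (\<lambda>t. \<phi> t / g t)"
  proof (rule smooth_on_divide)
    show "smooth_on {t. g t \<noteq> 0} \<phi>" "smooth_on {t. g t \<noteq> 0} g"
      using \<phi> g unfolding test_fun_def by (simp_all add: smooth_imp_smooth_on)
  qed (simp_all add: open_smooth_nonzero[OF g])
  moreover have "smooth_on (- tsupp \<phi>) (\<lambda>t. \<phi> t / g t)"
  proof (rule smooth_on_vanishing)
    show "open (- tsupp \<phi>)" by (simp add: tsupp_def open_Compl)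
  qed (simp add: eq_0_outside_tsupp)
  moreover have "{t. g t \<noteq> 0} \<union> - tsupp \<phi> = UNIV" using supp by blast
  ultimately show "smooth (\<lambda>t. \<phi> t / g t)" by (rule smooth_on_Un_UNIV)
qed simp

lemma eq_0_if_tsupp_subset_nonzero:
  fixes g :: "real^'n::finite \<Rightarrow> complex"
  assumes g: "smooth g" and annih: "\<And>\<xi>. test_fun \<xi> \<Longrightarrow> A (\<lambda>t. g t * \<xi> t) = 0"
    and \<phi>: "test_fun \<phi>" and supp: "tsupp \<phi> \<subseteq> {t. g t \<noteq> 0}"
  shows "A \<phi> = 0"
proof -
  have factor: "\<phi> = (\<lambda>t. g t * (\<phi> t / g t))"
  proof
    fix t
    show "\<phi> t = g t * (\<phi> t / g t)"
    proof (cases "g t = 0")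
      case True
      then have "t \<notin> tsupp \<phi>" using supp by blast
      then show ?thesis by (simp add: eq_0_outside_tsupp)
    qed simp
  qed
  show ?thesis by (subst factor) (rule annih[OF test_fun_divide[OF g \<phi> supp]])
qed

section \<open>Hyperoperators\<close>

lemma hyperoperator_mult:
  "hyperoperator J A \<Longrightarrow> test_fun \<phi> \<Longrightarrow> test_fun \<psi> \<Longrightarrow> A (\<lambda>t. \<phi> t * \<psi> t) = A \<phi> o\<^sub>L A \<psi>"
  unfolding hyperoperator_def by meson

lemma hyperoperator_common_kernel:
  "hyperoperator J A \<Longrightarrow> (\<And>\<phi>. test_fun \<phi> \<Longrightarrow> blinfun_apply (A \<phi>) x = 0) \<Longrightarrow> x = 0"
  unfolding hyperoperator_def by meson

lemma hyperoperator_mult_rep_independent: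
  assumes A: "hyperoperator J A" and g: "smooth g"
    and \<phi>: "test_fun \<phi>" and \<xi>: "test_fun \<xi>"
    and rep: "blinfun_apply (A \<phi>) y' = blinfun_apply (A \<xi>) y"
  shows "blinfun_apply (A (\<lambda>t. g t * \<phi> t)) y' = blinfun_apply (A (\<lambda>t. g t * \<xi> t)) y"
proof -
  have swap: "blinfun_apply (A \<theta>) (blinfun_apply (A (\<lambda>t. g t * \<psi> t)) z) =
      blinfun_apply (A (\<lambda>t. g t * \<theta> t)) (blinfun_apply (A \<psi>) z)"
    if \<theta>: "test_fun \<theta>" and \<psi>: "test_fun \<psi>" for \<theta> \<psi> z
  proof -
    have "A \<theta> o\<^sub>L A (\<lambda>t. g t * \<psi> t) = A (\<lambda>t. \<theta> t * (g t * \<psi> t))"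
      using hyperoperator_mult[OF A \<theta> test_fun_smooth_mult[OF g \<psi>]] by simp
    also have "(\<lambda>t. \<theta> t * (g t * \<psi> t)) = (\<lambda>t. (g t * \<theta> t) * \<psi> t)"
      by (simp add: algebra_simps)
    also have "A \<dots> = A (\<lambda>t. g t * \<theta> t) o\<^sub>L A \<psi>"
      using hyperoperator_mult[OF A test_fun_smooth_mult[OF g \<theta>] \<psi>] .
    finally show ?thesis by (metis blinfun_apply_blinfun_compose)
  qed
  have "blinfun_apply (A \<theta>)
      (blinfun_apply (A (\<lambda>t. g t * \<phi> t)) y' - blinfun_apply (A (\<lambda>t. g t * \<xi> t)) y) = 0"
    if "test_fun \<theta>" for \<theta>
    using swap[OF that \<phi>] swap[OF that \<xi>] rep by (simp add: blinfun.diff_right)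
  then show ?thesis using hyperoperator_common_kernel[OF A] by fastforce
qed

lemma hyp_fun_apply_eq:
  assumes A: "hyperoperator J A" and g: "smooth (\<lambda>t. complex_of_real (g t))"
    and \<xi>: "test_fun \<xi>"
  shows "hyp_fun_apply A g (blinfun_apply (A \<xi>) y) =
    blinfun_apply (A (\<lambda>t. complex_of_real (g t) * \<xi> t)) y"
proof -
  let ?P = "\<lambda>(\<phi>, y'). test_fun \<phi> \<and> blinfun_apply (A \<xi>) y = blinfun_apply (A \<phi>) y'"
  obtain \<phi> y' where rep: "(SOME p. ?P p) = (\<phi>, y')" by fastforce
  have "?P (SOME p. ?P p)" using \<xi> by (intro someI[of ?P "(\<xi>, y)"]) simp
  with rep show ?thesis
    using hyperoperator_mult_rep_independent[OF A g _ \<xi>] unfolding hyp_fun_apply_def by auto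
qed

lemma hyp_support_disjoint:
  assumes "open U" "\<And>\<phi>. test_fun \<phi> \<Longrightarrow> tsupp \<phi> \<subseteq> U \<Longrightarrow> A \<phi> = 0"
  shows "hyp_support A \<inter> U = {}"
  using assms unfolding hyp_support_def by blast

lemma hyp_support_subset_zero_set:
  fixes g :: "real^'n::finite \<Rightarrow> real"
  assumes A: "hyperoperator J A" and g: "smooth g"
    and vanish: "\<forall>x\<in>hyp_domain A. hyp_fun_apply A g x = 0"
  shows "hyp_support A \<subseteq> g -` {0}"
proof -
  let ?g = "\<lambda>t. complex_of_real (g t)"
  have smooth_g: "smooth ?g" using bounded_linear_of_real g by (rule smooth_bounded_linear)
  have annih: "A (\<lambda>t. ?g t * \<xi> t) = 0" if \<xi>: "test_fun \<xi>" for \<xi>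
  proof (rule blinfun_eqI)
    fix y
    have "blinfun_apply (A \<xi>) y \<in> hyp_domain A" using \<xi> by (auto simp: hyp_domain_def)
    then have "hyp_fun_apply A g (blinfun_apply (A \<xi>) y) = 0" using vanish by blast
    then show "blinfun_apply (A (\<lambda>t. ?g t * \<xi> t)) y = blinfun_apply 0 y"
      by (simp add: hyp_fun_apply_eq[OF A smooth_g \<xi>])
  qed
  have "hyp_support A \<inter> {t. ?g t \<noteq> 0} = {}"
    using open_smooth_nonzero[OF smooth_g]
      eq_0_if_tsupp_subset_nonzero[where A = A, OF smooth_g annih]
    by (rule hyp_support_disjoint) blast
  then show ?thesis by auto
qed

theorem corollary5p5:
  fixes J :: "'x::banach \<Rightarrow>\<^sub>L 'x"
    and A :: "(real^'n::finite \<Rightarrow> complex) \<Rightarrow> ('x \<Rightarrow>\<^sub>L 'x)"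
    and f :: "real^'n \<Rightarrow> real^'m::finite"
  assumes "complex_structure J"
    and "hyperoperator J A"
    and "smooth f"
    and "\<forall>x\<in>hyp_domain A. \<forall>k. hyp_fun_apply A (\<lambda>t. f t $ k) x = 0"
  shows "hyp_support A \<subseteq> f -` {0}"
proof
  fix t assume t: "t \<in> hyp_support A"
  have "f t $ k = 0" for k
  proof -
    have "smooth (\<lambda>t. f t $ k)" using bounded_linear_vec_nth assms(3) by (rule smooth_bounded_linear)
    moreover have "\<forall>x\<in>hyp_domain A. hyp_fun_apply A (\<lambda>t. f t $ k) x = 0" using assms(4) by blast
    ultimately show ?thesis using hyp_support_subset_zero_set[OF assms(2)] t by blast
  qed
  then show "t \<in> f -` {0}" by (simp add: vec_eq_iff)
qed

end
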